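(* Let $q(\bar x)\,{:}{-}\,A\wedge C$ be a conjunctive query with comparisons. If $q_1$ and $q_2$ are both cores of $q$, then $q_1$ and $q_2$ are isomorphic via a bijection that is the identity on the variables $\bar x$.
   Context: Fix a dense linearly ordered domain $\Delta$ of constants; terms are constants or variables. A conjunctive query with comparisons (CQC) $q(\bar x)\,{:}{-}\,A\wedge C$ consists of distinguished variables $\bar x$, a finite set $A$ of relational atoms over terms, and a finite set $C$ of comparisons $s\,\rho\,t$, $\rho\in\{=,<,\le\}$. $C\models s\,\rho\,t$ means every assignment to $\Delta$ satisfying $C$ satisfies $s\,\rho\,t$. For CQCs $q_1(\bar x)\,{:}{-}\,A_1\wedge C_1$, $q_2(\bar x)\,{:}{-}\,A_2\wedge C_2$, a homomorphism $q_1\to_{\bar x}q_2$ is a map $h$ from terms of $q_1$ to terms of $q_2$, identity on constants and on $\bar x$, with $h(A_1)\subseteq A_2$ and $C_2\models h(r)\,\rho\,h(s)$ for all $r\,\rho\,s\in C_1$. An isomorphism is a bijection $h$ between variables, identity on constants (and on $\bar x$), with $h(A_1)=A_2$ and $h(C_1)=C_2$. The extension $\mathrm{ext}(q)$ replaces $C$ by $\{r\,\rho\,s: r,s\text{ terms of }q,\ C\models r\,\rho\,s\}$. A core of $q$ is a CQC $q'$ such that (1) $q\to_{\bar x}q'$; (2) for every CQC $q''$ with $q\to_{\bar x}q''$ and $q''\to_{\bar x}q$ there is an injective homomorphism $q'\to_{\bar x}q''$; (3) $q'=\mathrm{ext}(q')$. *)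

theory Defs
  imports Main
begin

datatype cmp = Eq | Lt | Le

datatype ('c, 'v) trm = Cst 'c | Vr 'v

type_synonym ('r, 'c, 'v) atom = "'r \<times> ('c, 'v) trm list"
type_synonym ('c, 'v) comparison = "('c, 'v) trm \<times> cmp \<times> ('c, 'v) trm"

text \<open>A CQC body: relational atoms A and comparisons C. The distinguished
  variables x-bar are passed separately as a list.\<close>
datatype ('r, 'c, 'v) cqc =
  CQC (atoms: "('r, 'c, 'v) atom set") (comps: "('c, 'v) comparison set")

definition is_cqc :: "('r, 'c, 'v) cqc \<Rightarrow> bool" where
  "is_cqc q \<longleftrightarrow> finite (atoms q) \<and> finite (comps q)"

fun eval :: "('v \<Rightarrow> 'c) \<Rightarrow> ('c, 'v) trm \<Rightarrow> 'c" where
  "eval \<sigma> (Cst c) = c"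
| "eval \<sigma> (Vr v) = \<sigma> v"

fun holds :: "cmp \<Rightarrow> 'c::linorder \<Rightarrow> 'c \<Rightarrow> bool" where
  "holds Eq a b \<longleftrightarrow> a = b"
| "holds Lt a b \<longleftrightarrow> a < b"
| "holds Le a b \<longleftrightarrow> a \<le> b"

definition entails :: "('c::linorder, 'v) comparison set \<Rightarrow> ('c, 'v) comparison \<Rightarrow> bool" where
  "entails C c \<longleftrightarrow>
     (\<forall>\<sigma> :: 'v \<Rightarrow> 'c. (\<forall>(a, r, b) \<in> C. holds r (eval \<sigma> a) (eval \<sigma> b)) \<longrightarrow>
        (case c of (s, r, t) \<Rightarrow> holds r (eval \<sigma> s) (eval \<sigma> t)))"

definition terms :: "('r, 'c, 'v) cqc \<Rightarrow> ('c, 'v) trm set" where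
  "terms q = (\<Union>(R, ts) \<in> atoms q. set ts) \<union> (\<Union>(a, r, b) \<in> comps q. {a, b})"

definition vars :: "('r, 'c, 'v) cqc \<Rightarrow> 'v set" where
  "vars q = {v. Vr v \<in> terms q}"

fun subst :: "('v \<Rightarrow> ('c, 'v) trm) \<Rightarrow> ('c, 'v) trm \<Rightarrow> ('c, 'v) trm" where
  "subst h (Cst c) = Cst c"
| "subst h (Vr v) = h v"

definition hom :: "'v list \<Rightarrow> ('r, 'c::linorder, 'v) cqc \<Rightarrow> ('r, 'c, 'v) cqc
                    \<Rightarrow> ('v \<Rightarrow> ('c, 'v) trm) \<Rightarrow> bool" where
  "hom xs q1 q2 h \<longleftrightarrow>
     (\<forall>t \<in> terms q1. subst h t \<in> terms q2) \<and>
     (\<forall>x \<in> set xs. h x = Vr x) \<and>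
     (\<forall>(R, ts) \<in> atoms q1. (R, map (subst h) ts) \<in> atoms q2) \<and>
     (\<forall>(a, r, b) \<in> comps q1. entails (comps q2) (subst h a, r, subst h b))"

definition inj_hom :: "'v list \<Rightarrow> ('r, 'c::linorder, 'v) cqc \<Rightarrow> ('r, 'c, 'v) cqc
                    \<Rightarrow> ('v \<Rightarrow> ('c, 'v) trm) \<Rightarrow> bool" where
  "inj_hom xs q1 q2 h \<longleftrightarrow> hom xs q1 q2 h \<and> inj_on (subst h) (terms q1)"

definition ext :: "('r, 'c::linorder, 'v) cqc \<Rightarrow> ('r, 'c, 'v) cqc" where
  "ext q = CQC (atoms q)
     {(a, r, b). a \<in> terms q \<and> b \<in> terms q \<and> entails (comps q) (a, r, b)}"

definition is_core :: "'v list \<Rightarrow> ('r, 'c::linorder, 'v) cqc \<Rightarrow> ('r, 'c, 'v) cqc \<Rightarrow> bool" where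
  "is_core xs q q' \<longleftrightarrow>
     is_cqc q' \<and>
     (\<exists>h. hom xs q q' h) \<and>
     (\<forall>q''. is_cqc q'' \<and> (\<exists>h. hom xs q q'' h) \<and> (\<exists>h. hom xs q'' q h) \<longrightarrow>
            (\<exists>h. inj_hom xs q' q'' h)) \<and>
     q' = ext q'"

fun ren :: "('v \<Rightarrow> 'v) \<Rightarrow> ('c, 'v) trm \<Rightarrow> ('c, 'v) trm" where
  "ren h (Cst c) = Cst c"
| "ren h (Vr v) = Vr (h v)"

definition iso :: "'v list \<Rightarrow> ('r, 'c, 'v) cqc \<Rightarrow> ('r, 'c, 'v) cqc \<Rightarrow> ('v \<Rightarrow> 'v) \<Rightarrow> bool" where
  "iso xs q1 q2 h \<longleftrightarrow>
     bij_betw h (vars q1) (vars q2) \<and>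
     (\<forall>x \<in> set xs. (x \<in> vars q1 \<longrightarrow> h x = x) \<and> (x \<in> vars q2 \<longrightarrow> x \<in> vars q1)) \<and>
     (\<lambda>(R, ts). (R, map (ren h) ts)) ` atoms q1 = atoms q2 \<and>
     (\<lambda>(a, r, b). (ren h a, r, ren h b)) ` comps q1 = comps q2"

end

theory Submission
  imports Defs
begin

text \<open>Two cores of q are homomorphically equivalent to q, so by minimality each one
  embeds injectively into the other. For finite queries, mutual injective embeddings
  are bijections on terms, atoms and comparisons (for the comparisons one uses that
  cores are closed under entailment). Constants are fixed by homomorphisms, so an
  injective term map onto the terms of the other core sends variables to variables,
  and restricting it to variables yields the isomorphism.\<close>

abbreviation atom_map :: "(('c, 'v) trm \<Rightarrow> ('c, 'v) trm) \<Rightarrow> ('r, 'c, 'v) atom \<Rightarrow> ('r, 'c, 'v) atom"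
  where "atom_map f \<equiv> \<lambda>(R, ts). (R, map f ts)"

abbreviation comp_map :: "(('c, 'v) trm \<Rightarrow> ('c, 'v) trm) \<Rightarrow> ('c, 'v) comparison \<Rightarrow> ('c, 'v) comparison"
  where "comp_map f \<equiv> \<lambda>(a, r, b). (f a, r, f b)"

lemma image_eq_if_inj_on_both_ways:
  assumes "finite A" "finite B" "inj_on f A" "f ` A \<subseteq> B" "inj_on g B" "g ` B \<subseteq> A"
  shows "f ` A = B"
proof -
  have "card A \<le> card B" "card B \<le> card A"
    using card_inj_on_le assms by blast+
  then have "card (f ` A) = card B" using card_image[OF assms(3)] by simp
  then show ?thesis using card_subset_eq assms by blast
qed

lemma finite_terms: "is_cqc q \<Longrightarrow> finite (terms q)"
  unfolding is_cqc_def terms_def by auto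

lemma atom_terms: "(R, ts) \<in> atoms q \<Longrightarrow> set ts \<subseteq> terms q"
  unfolding terms_def by auto

lemma comp_terms: "(a, r, b) \<in> comps q \<Longrightarrow> a \<in> terms q \<and> b \<in> terms q"
  unfolding terms_def by auto

lemma atom_map_image_cong:
  assumes "\<And>t. t \<in> terms q \<Longrightarrow> f t = g t"
  shows "atom_map f ` atoms q = atom_map g ` atoms q"
proof (rule image_cong[OF refl])
  fix a assume "a \<in> atoms q"
  moreover obtain R ts where a: "a = (R, ts)" by fastforce
  ultimately have "set ts \<subseteq> terms q" by (simp add: atom_terms)
  with a assms show "atom_map f a = atom_map g a" by (auto intro: map_cong)
qed

lemma comp_map_image_cong:
  assumes "\<And>t. t \<in> terms q \<Longrightarrow> f t = g t"
  shows "comp_map f ` comps q = comp_map g ` comps q"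
  using assms by (intro image_cong[OF refl]) (auto dest: comp_terms)

lemma comps_ext_closed:
  assumes "q = ext q" "a \<in> terms q" "b \<in> terms q" "entails (comps q) (a, r, b)"
  shows "(a, r, b) \<in> comps q"
proof -
  have "(a, r, b) \<in> comps (ext q)" using assms(2-) unfolding ext_def by simp
  with assms(1) show ?thesis by simp
qed

lemma subst_Vr: "subst Vr = id"
proof
  fix t :: "('c, 'v) trm" show "subst Vr t = id t" by (cases t) auto
qed

lemma hom_id: "hom xs q q Vr"
  unfolding hom_def entails_def by (auto simp: subst_Vr)

lemma hom_terms: "hom xs q1 q2 h \<Longrightarrow> subst h ` terms q1 \<subseteq> terms q2"
  unfolding hom_def by blast

lemma hom_Cst: "hom xs q1 q2 h \<Longrightarrow> Cst c \<in> terms q1 \<Longrightarrow> Cst c \<in> terms q2"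
  using hom_terms by fastforce

lemma hom_distinguished: "hom xs q1 q2 h \<Longrightarrow> x \<in> set xs \<Longrightarrow> x \<in> vars q1 \<Longrightarrow> x \<in> vars q2"
  unfolding hom_def vars_def by force

lemma inj_hom_atoms:
  assumes "inj_hom xs q1 q2 h"
  shows "inj_on (atom_map (subst h)) (atoms q1) \<and> atom_map (subst h) ` atoms q1 \<subseteq> atoms q2"
proof
  have inj: "inj_on (subst h) (terms q1)" using assms unfolding inj_hom_def by blast
  show "inj_on (atom_map (subst h)) (atoms q1)"
  proof (rule inj_onI)
    fix x y
    assume x: "x \<in> atoms q1" and y: "y \<in> atoms q1"
      and eq: "atom_map (subst h) x = atom_map (subst h) y"
    have "set (snd x) \<union> set (snd y) \<subseteq> terms q1"
      using atom_terms[of "fst x" "snd x"] atom_terms[of "fst y" "snd y"] x y by simp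
    then have "inj_on (subst h) (set (snd x) \<union> set (snd y))"
      using inj inj_on_subset by blast
    with eq show "x = y" by (cases x, cases y) (simp add: inj_on_map_eq_map)
  qed
  show "atom_map (subst h) ` atoms q1 \<subseteq> atoms q2"
    using assms unfolding inj_hom_def hom_def by auto
qed

lemma inj_hom_comps:
  assumes "inj_hom xs q1 q2 h" "q2 = ext q2"
  shows "inj_on (comp_map (subst h)) (comps q1) \<and> comp_map (subst h) ` comps q1 \<subseteq> comps q2"
proof
  have hom: "hom xs q1 q2 h" and inj: "inj_on (subst h) (terms q1)"
    using assms(1) unfolding inj_hom_def by blast+
  show "inj_on (comp_map (subst h)) (comps q1)"
    using inj by (auto intro!: inj_onI dest: comp_terms inj_onD)
  show "comp_map (subst h) ` comps q1 \<subseteq> comps q2"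
  proof clarify
    fix a r b assume c: "(a, r, b) \<in> comps q1"
    then have "entails (comps q2) (subst h a, r, subst h b)"
      using hom unfolding hom_def by blast
    moreover have "subst h a \<in> terms q2" "subst h b \<in> terms q2"
      using hom_terms[OF hom] comp_terms[OF c] by blast+
    ultimately show "(subst h a, r, subst h b) \<in> comps q2"
      using comps_ext_closed[OF assms(2)] by blast
  qed
qed

lemma inj_hom_onto_terms:
  assumes "is_cqc q1" "is_cqc q2" "inj_hom xs q1 q2 h1" "inj_hom xs q2 q1 h2"
  shows "subst h1 ` terms q1 = terms q2"
  using assms
  by (intro image_eq_if_inj_on_both_ways finite_terms) (auto simp: inj_hom_def dest: hom_terms)

lemma inj_hom_onto_atoms:
  assumes "is_cqc q1" "is_cqc q2" "inj_hom xs q1 q2 h1" "inj_hom xs q2 q1 h2"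
  shows "atom_map (subst h1) ` atoms q1 = atoms q2"
  using assms inj_hom_atoms[OF assms(3)] inj_hom_atoms[OF assms(4)]
  by (intro image_eq_if_inj_on_both_ways) (auto simp: is_cqc_def)

lemma inj_hom_onto_comps:
  assumes "is_cqc q1" "is_cqc q2" "q1 = ext q1" "q2 = ext q2"
    and "inj_hom xs q1 q2 h1" "inj_hom xs q2 q1 h2"
  shows "comp_map (subst h1) ` comps q1 = comps q2"
  using assms inj_hom_comps[OF assms(5,4)] inj_hom_comps[OF assms(6,3)]
  by (intro image_eq_if_inj_on_both_ways) (auto simp: is_cqc_def)

text \<open>A constant image of a variable would also be a term of q1 (constants are kept by
  the reverse homomorphism), contradicting injectivity.\<close>
lemma inj_hom_var_to_var:
  assumes "inj_hom xs q1 q2 h1" "hom xs q2 q1 h2" "v \<in> vars q1"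
  obtains w where "h1 v = Vr w"
proof (cases "h1 v")
  case (Cst c)
  have v: "Vr v \<in> terms q1" using assms(3) unfolding vars_def by simp
  then have "Cst c \<in> terms q1"
    using Cst assms(1) hom_Cst[OF assms(2)] hom_terms unfolding inj_hom_def by fastforce
  with v Cst assms(1) have "Cst c = Vr v"
    unfolding inj_hom_def by (metis inj_onD subst.simps)
  then show ?thesis by simp
qed

definition var_renaming :: "('v \<Rightarrow> ('c, 'v) trm) \<Rightarrow> 'v \<Rightarrow> 'v" where
  "var_renaming h v = (case h v of Vr w \<Rightarrow> w | Cst _ \<Rightarrow> v)"

lemma ren_var_renaming:
  assumes "\<And>v. t = Vr v \<Longrightarrow> \<exists>w. h v = Vr w"
  shows "ren (var_renaming h) t = subst h t"
  using assms by (cases t) (auto simp: var_renaming_def)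

lemma bij_betw_vars_if_ren_bij:
  assumes "inj_on (ren \<rho>) (terms q1)" "ren \<rho> ` terms q1 = terms q2"
  shows "bij_betw \<rho> (vars q1) (vars q2)"
  unfolding bij_betw_def
proof
  show "inj_on \<rho> (vars q1)"
  proof (rule inj_onI)
    fix v w assume "v \<in> vars q1" "w \<in> vars q1" "\<rho> v = \<rho> w"
    then have "ren \<rho> (Vr v) = ren \<rho> (Vr w)" "Vr v \<in> terms q1" "Vr w \<in> terms q1"
      unfolding vars_def by simp_all
    then show "v = w" using inj_onD[OF assms(1)] by blast
  qed
  show "\<rho> ` vars q1 = vars q2"
  proof
    show "\<rho> ` vars q1 \<subseteq> vars q2" using assms(2) unfolding vars_def by force
    show "vars q2 \<subseteq> \<rho> ` vars q1"
    proof
      fix w assume "w \<in> vars q2"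
      then obtain t where "t \<in> terms q1" "Vr w = ren \<rho> t"
        using assms(2) unfolding vars_def by force
      then show "w \<in> \<rho> ` vars q1" unfolding vars_def by (cases t) auto
    qed
  qed
qed

lemma iso_if_mutual_inj_hom:
  assumes "is_cqc q1" "is_cqc q2" "q1 = ext q1" "q2 = ext q2"
    and h1: "inj_hom xs q1 q2 h1" and h2: "inj_hom xs q2 q1 h2"
  shows "iso xs q1 q2 (var_renaming h1)"
proof -
  let ?\<rho> = "var_renaming h1"
  have hom2: "hom xs q2 q1 h2" using h2 unfolding inj_hom_def by blast
  have ren_eq: "ren ?\<rho> t = subst h1 t" if "t \<in> terms q1" for t
  proof (rule ren_var_renaming)
    fix v assume "t = Vr v"
    with that have "v \<in> vars q1" unfolding vars_def by simp
    then show "\<exists>w. h1 v = Vr w" by (rule inj_hom_var_to_var[OF h1 hom2]) blast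
  qed
  have "ren ?\<rho> ` terms q1 = subst h1 ` terms q1"
    using ren_eq by (rule image_cong[OF refl])
  then have "ren ?\<rho> ` terms q1 = terms q2"
    using inj_hom_onto_terms[OF assms(1,2) h1 h2] by simp
  moreover have "inj_on (ren ?\<rho>) (terms q1)"
    using h1 inj_on_cong[of "terms q1" "ren ?\<rho>" "subst h1"] ren_eq unfolding inj_hom_def by blast
  ultimately have bij: "bij_betw ?\<rho> (vars q1) (vars q2)"
    by (intro bij_betw_vars_if_ren_bij)
  have "h1 x = Vr x" if "x \<in> set xs" for x
    using h1 that unfolding inj_hom_def hom_def by blast
  then have "\<forall>x \<in> set xs. (x \<in> vars q1 \<longrightarrow> ?\<rho> x = x) \<and> (x \<in> vars q2 \<longrightarrow> x \<in> vars q1)"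
    using hom_distinguished[OF hom2] by (simp add: var_renaming_def)
  moreover have "atom_map (ren ?\<rho>) ` atoms q1 = atoms q2"
    using atom_map_image_cong[where q = q1 and f = "ren ?\<rho>" and g = "subst h1", OF ren_eq]
      inj_hom_onto_atoms[OF assms(1,2) h1 h2]
    by simp
  moreover have "comp_map (ren ?\<rho>) ` comps q1 = comps q2"
    using comp_map_image_cong[where q = q1 and f = "ren ?\<rho>" and g = "subst h1", OF ren_eq]
      inj_hom_onto_comps[OF assms]
    by simp
  ultimately show ?thesis unfolding iso_def using bij by blast
qed

lemma is_coreD:
  assumes "is_core xs q q'"
  shows "is_cqc q'" "\<exists>h. hom xs q q' h" "q' = ext q'"
    and "\<And>q'' g g'. is_cqc q'' \<Longrightarrow> hom xs q q'' g \<Longrightarrow> hom xs q'' q g' \<Longrightarrow> \<exists>h. inj_hom xs q' q'' h"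
  using assms unfolding is_core_def by blast+

text \<open>Taking q'' = q in the minimality of a core shows that every core maps back into q.\<close>
lemma core_inj_hom_core:
  assumes "is_cqc q" "is_core xs q q1" "is_core xs q q2"
  obtains h where "inj_hom xs q1 q2 h"
proof -
  obtain g where "hom xs q q2 g" using is_coreD(2)[OF assms(3)] by blast
  moreover obtain g' where "inj_hom xs q2 q g'"
    using is_coreD(4)[OF assms(3,1) hom_id hom_id] by blast
  ultimately obtain h where "inj_hom xs q1 q2 h"
    using is_coreD(4)[OF assms(2) is_coreD(1)[OF assms(3)]] unfolding inj_hom_def by blast
  then show ?thesis by (rule that)
qed

theorem mainTheorem2:
  fixes q q1 q2 :: "('r, 'c::dense_linorder, 'v) cqc" and xs :: "'v list"
  assumes "is_cqc q"
    and "is_core xs q q1"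
    and "is_core xs q q2"
  shows "\<exists>h. iso xs q1 q2 h"
proof -
  obtain h1 where "inj_hom xs q1 q2 h1" using core_inj_hom_core assms by blast
  moreover obtain h2 where "inj_hom xs q2 q1 h2" using core_inj_hom_core assms by blast
  ultimately have "iso xs q1 q2 (var_renaming h1)"
    using iso_if_mutual_inj_hom is_coreD(1,3) assms(2,3) by blast
  then show ?thesis by blast
qed

end
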